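(* Let $M$ be a von Neumann algebra and $\{b_j\}_{j\ge1}$ a sequence of positive elements of $M$ such that (i) $R_{b_i}R_{b_j}=0$ whenever $|i-j|>1$; (ii) each $b_j$ is a sum of $N_j$ projections in $M$; (iii) $N:=\sup_jN_j<\infty$. Then $b:=\sum_{j=1}^\infty b_j$ converges in the strong operator topology and $b$ is a sum of $2N$ projections in $M$.
   Context: $R_x$ denotes the range projection of $x$. *)

theory Defs
  imports Complex_Main
begin

text \<open>Complex Hilbert spaces (inner product linear in the second argument),
  developed from scratch since HOL-Analysis only has real inner product spaces.\<close>

class chilbert = ab_group_add +
  fixes cscale :: "complex \<Rightarrow> 'a \<Rightarrow> 'a"
    and cinner :: "'a \<Rightarrow> 'a \<Rightarrow> complex"
  assumes cscale_add_right: "cscale a (x + y) = cscale a x + cscale a y"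
    and cscale_add_left: "cscale (a + b) x = cscale a x + cscale b x"
    and cscale_cscale: "cscale a (cscale b x) = cscale (a * b) x"
    and cscale_one: "cscale 1 x = x"
    and cinner_add_right: "cinner x (y + z) = cinner x y + cinner x z"
    and cinner_cscale_right: "cinner x (cscale a y) = a * cinner x y"
    and cinner_cnj: "cinner y x = cnj (cinner x y)"
    and cinner_nonneg: "0 \<le> Re (cinner x x)"
    and cinner_eq_zero: "cinner x x = 0 \<Longrightarrow> x = 0"
    and cinner_complete:
      "(\<forall>e>0. \<exists>K. \<forall>m\<ge>K. \<forall>n\<ge>K.
          sqrt (Re (cinner (f m - f n) (f m - f n))) < e)
       \<Longrightarrow> \<exists>l. (\<lambda>n. sqrt (Re (cinner (f n - l) (f n - l)))) \<longlonglongrightarrow> 0"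

definition hnorm :: "'a::chilbert \<Rightarrow> real" where
  "hnorm x = sqrt (Re (cinner x x))"

definition hclosure :: "'a::chilbert set \<Rightarrow> 'a set" where
  "hclosure S = {x. \<forall>e>0. \<exists>y\<in>S. hnorm (x - y) < e}"

definition bounded_op :: "('a::chilbert \<Rightarrow> 'a) \<Rightarrow> bool" where
  "bounded_op T \<longleftrightarrow>
     (\<forall>x y. T (x + y) = T x + T y) \<and> (\<forall>a x. T (cscale a x) = cscale a (T x)) \<and>
     (\<exists>K. \<forall>x. hnorm (T x) \<le> K * hnorm x)"

definition is_adjoint :: "('a::chilbert \<Rightarrow> 'a) \<Rightarrow> ('a \<Rightarrow> 'a) \<Rightarrow> bool" where
  "is_adjoint T S \<longleftrightarrow> (\<forall>x y. cinner (T x) y = cinner x (S y))"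

definition positive_op :: "('a::chilbert \<Rightarrow> 'a) \<Rightarrow> bool" where
  "positive_op T \<longleftrightarrow> bounded_op T \<and>
     (\<forall>x. Im (cinner x (T x)) = 0 \<and> 0 \<le> Re (cinner x (T x)))"

definition projection :: "('a::chilbert \<Rightarrow> 'a) \<Rightarrow> bool" where
  "projection P \<longleftrightarrow> bounded_op P \<and> P \<circ> P = P \<and> is_adjoint P P"

definition range_proj :: "('a::chilbert \<Rightarrow> 'a) \<Rightarrow> ('a \<Rightarrow> 'a)" where
  "range_proj T = (THE P. projection P \<and> range P = hclosure (range T))"

definition sot_closed :: "('a::chilbert \<Rightarrow> 'a) set \<Rightarrow> bool" where
  "sot_closed M \<longleftrightarrow> (\<forall>T. bounded_op T \<and>
      (\<forall>F e. finite F \<and> e > 0 \<longrightarrow> (\<exists>S\<in>M. \<forall>x\<in>F. hnorm (T x - S x) < e))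
      \<longrightarrow> T \<in> M)"

definition von_neumann_algebra :: "('a::chilbert \<Rightarrow> 'a) set \<Rightarrow> bool" where
  "von_neumann_algebra M \<longleftrightarrow>
     (\<forall>T\<in>M. bounded_op T) \<and> id \<in> M \<and>
     (\<forall>S\<in>M. \<forall>T\<in>M. (\<lambda>x. S x + T x) \<in> M) \<and>
     (\<forall>a. \<forall>T\<in>M. (\<lambda>x. cscale a (T x)) \<in> M) \<and>
     (\<forall>S\<in>M. \<forall>T\<in>M. S \<circ> T \<in> M) \<and>
     (\<forall>T\<in>M. \<exists>S\<in>M. is_adjoint T S) \<and>
     sot_closed M"

definition sum_of_projections :: "('a::chilbert \<Rightarrow> 'a) set \<Rightarrow> nat \<Rightarrow> ('a \<Rightarrow> 'a) \<Rightarrow> bool" where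
  "sum_of_projections M n b \<longleftrightarrow>
     (\<exists>P. (\<forall>k<n. P k \<in> M \<and> projection (P k)) \<and> b = (\<lambda>x. \<Sum>k<n. P k x))"

definition sot_sums :: "(nat \<Rightarrow> 'a::chilbert \<Rightarrow> 'a) \<Rightarrow> ('a \<Rightarrow> 'a) \<Rightarrow> bool" where
  "sot_sums b B \<longleftrightarrow> (\<forall>x. (\<lambda>n. hnorm ((\<Sum>j<n. b j x) - B x)) \<longlonglongrightarrow> 0)"

end

theory Submission
  imports Defs
begin

(* Write every b_j as a sum of exactly N projections P j k (padding with zeros).  Each P j k lies
   under the range projection R_(b j), because P j k <= b j as positive operators.  Hence for
   non-adjacent i, j the projections P i k and P j k are orthogonal.  Fix a parity p and an index
   k: the projections P j k with j of parity p are pairwise orthogonal, so their series converges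
   strongly to a projection L p k, which lies in M because M is strongly closed.  Summing over
   the two parities and the N indices k shows that sum_j b_j converges strongly to
   sum_k (L 0 k + L 1 k), a sum of 2N projections of M. *)


lemma cinner_add_left: "cinner (x + y) z = cinner x z + cinner y (z::'a::chilbert)"
  by (subst (1 2 3) cinner_cnj) (simp add: cinner_add_right)

lemma cinner_cscale_left: "cinner (cscale a x) (y::'a::chilbert) = cnj a * cinner x y"
  by (subst (1 2) cinner_cnj) (simp add: cinner_cscale_right)

lemma cinner_zero_right [simp]: "cinner (x::'a::chilbert) 0 = 0"
  using cinner_add_right[of x 0 0] by simp

lemma cinner_zero_left [simp]: "cinner 0 (x::'a::chilbert) = 0"
  using cinner_add_left[of 0 0 x] by simp

lemma cinner_minus_right: "cinner (x::'a::chilbert) (- y) = - cinner x y"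
  using cinner_add_right[of x y "-y"] by (simp add: eq_neg_iff_add_eq_0 add.commute)

lemma cinner_minus_left: "cinner (- x) (y::'a::chilbert) = - cinner x y"
  using cinner_add_left[of x "-x" y] by (simp add: eq_neg_iff_add_eq_0 add.commute)

lemma cinner_diff_right: "cinner (x::'a::chilbert) (y - z) = cinner x y - cinner x z"
  using cinner_add_right[of x y "-z"] by (simp add: cinner_minus_right)

lemma cinner_diff_left: "cinner (x - y) (z::'a::chilbert) = cinner x z - cinner y z"
  using cinner_add_left[of x "-y" z] by (simp add: cinner_minus_left)

lemma cinner_sum_right: "cinner (x::'a::chilbert) (sum f A) = (\<Sum>i\<in>A. cinner x (f i))"
  by (induct A rule: infinite_finite_induct) (simp_all add: cinner_add_right)

lemma cinner_sum_left: "cinner (sum f A) (x::'a::chilbert) = (\<Sum>i\<in>A. cinner (f i) x)"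
  by (induct A rule: infinite_finite_induct) (simp_all add: cinner_add_left)

lemma cscale_zero_left [simp]: "cscale 0 (x::'a::chilbert) = 0"
  using cscale_add_left[of 0 0 x] by simp

lemma cscale_zero_right [simp]: "cscale a (0::'a::chilbert) = 0"
  using cscale_add_right[of a 0 0] by simp

lemma cscale_minus_right: "cscale a (- x::'a::chilbert) = - cscale a x"
  using cscale_add_right[of a x "-x"] by (simp add: eq_neg_iff_add_eq_0 add.commute)

lemma cscale_diff_right: "cscale a (x - y::'a::chilbert) = cscale a x - cscale a y"
  using cscale_add_right[of a x "-y"] by (simp add: cscale_minus_right)

lemma cscale_sum_right: "cscale a (sum f A::'a::chilbert) = (\<Sum>i\<in>A. cscale a (f i))"
  by (induct A rule: infinite_finite_induct) (simp_all add: cscale_add_right)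

lemma cscale_two: "cscale 2 x = x + (x::'a::chilbert)"
  using cscale_add_left[of 1 1 x] by (simp add: cscale_one)

lemma cinner_self_Im [simp]: "Im (cinner x (x::'a::chilbert)) = 0"
  using arg_cong[OF cinner_cnj[of x x], of Im] by simp

lemma Re_cinner_commute: "Re (cinner y (x::'a::chilbert)) = Re (cinner x y)"
  by (subst cinner_cnj) simp

lemma Re_cinner_self_eq_0: "Re (cinner x (x::'a::chilbert)) = 0 \<longleftrightarrow> x = 0"
  using cinner_eq_zero[of x] cinner_self_Im[of x] by (auto simp: complex_eq_iff)

lemma cinner_ext: "(\<And>z. cinner z x = cinner z (y::'a::chilbert)) \<Longrightarrow> x = y"
  using cinner_eq_zero[of "x - y"] by (metis cinner_diff_right diff_self eq_iff_diff_eq_0)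

lemma expand_diff:
  "Re (cinner (x - cscale (complex_of_real t) y) (x - cscale (complex_of_real t) y))
     = Re (cinner x x) - 2 * t * Re (cinner x y) + t^2 * Re (cinner y (y::'a::chilbert))"
  by (simp add: cinner_diff_left cinner_diff_right cinner_cscale_left cinner_cscale_right
      Re_cinner_commute[of y x] power2_eq_square algebra_simps)

lemma expand_add:
  "Re (cinner (x + y) (x + y)) = Re (cinner x x) + 2 * Re (cinner x y) + Re (cinner y (y::'a::chilbert))"
  by (simp add: cinner_add_left cinner_add_right Re_cinner_commute[of y x])

lemma parallelogram:
  "Re (cinner (u - v) (u - v)) + Re (cinner (u + v) (u + v))
     = 2 * Re (cinner u u) + 2 * Re (cinner v (v::'a::chilbert))"
  using expand_diff[of u 1 v] expand_add[of u v] by (simp add: cscale_one)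


lemma hnorm_nonneg [simp]: "0 \<le> hnorm (x::'a::chilbert)"
  by (simp add: hnorm_def cinner_nonneg)

lemma hnorm_sq: "(hnorm x)^2 = Re (cinner x x)"
  by (simp add: hnorm_def cinner_nonneg)

lemma hnorm_eq_0 [simp]: "hnorm (x::'a::chilbert) = 0 \<longleftrightarrow> x = 0"
  by (simp add: hnorm_def Re_cinner_self_eq_0 cinner_nonneg)

lemma hnorm_zero [simp]: "hnorm (0::'a::chilbert) = 0"
  by simp

lemma hnorm_sq_mono: "hnorm a \<le> hnorm b \<Longrightarrow> Re (cinner a a) \<le> Re (cinner b (b::'a::chilbert))"
  using power_mono[of "hnorm a" "hnorm b" 2] by (simp add: hnorm_sq)

lemma cauchy_schwarz_Re: "Re (cinner x (y::'a::chilbert)) \<le> hnorm x * hnorm y"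
proof (cases "y = 0")
  case False
  define A B C where "A = Re (cinner x x)" and "B = Re (cinner x y)" and "C = Re (cinner y y)"
  have C: "C > 0"
    using False cinner_nonneg[of y] Re_cinner_self_eq_0[of y] unfolding C_def by linarith
  have "0 \<le> A - 2 * (B/C) * B + (B/C)^2 * C"
    using expand_diff[of x "B/C" y] cinner_nonneg[of "x - cscale (complex_of_real (B/C)) y"]
    unfolding A_def B_def C_def by linarith
  also have "\<dots> = A - B^2 / C"
    using C by (simp add: power2_eq_square field_simps)
  finally have "B^2 \<le> A * C"
    using C by (simp add: field_simps)
  then have "\<bar>B\<bar> \<le> sqrt (A * C)"
    using real_sqrt_le_mono by fastforce
  then show ?thesis
    unfolding hnorm_def A_def B_def C_def by (simp add: real_sqrt_mult)
qed simp

lemma hnorm_triangle: "hnorm (x + y) \<le> hnorm x + hnorm (y::'a::chilbert)"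
proof -
  have "(hnorm (x + y))^2 = (hnorm x)^2 + 2 * Re (cinner x y) + (hnorm y)^2"
    unfolding hnorm_sq by (rule expand_add)
  also have "\<dots> \<le> (hnorm x + hnorm y)^2"
    using cauchy_schwarz_Re[of x y] by (simp add: power2_eq_square algebra_simps)
  finally show ?thesis
    by (rule power2_le_imp_le) simp
qed

lemma hnorm_minus: "hnorm (- x) = hnorm (x::'a::chilbert)"
  by (simp add: hnorm_def cinner_minus_left cinner_minus_right)

lemma hnorm_commute: "hnorm (x - y) = hnorm (y - (x::'a::chilbert))"
  using hnorm_minus[of "x - y"] by simp

lemma hnorm_triangle_diff: "hnorm (x - z) \<le> hnorm (x - y) + hnorm (y - (z::'a::chilbert))"
  using hnorm_triangle[of "x - y" "y - z"] by simp

lemma hnorm_cscale: "hnorm (cscale a x) = cmod a * hnorm (x::'a::chilbert)"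
proof -
  have "cinner (cscale a x) (cscale a x) = (a * cnj a) * cinner x x"
    by (simp add: cinner_cscale_left cinner_cscale_right mult.commute mult.left_commute)
  then have "Re (cinner (cscale a x) (cscale a x)) = (cmod a)^2 * Re (cinner x x)"
    by (simp add: complex_norm_square[symmetric])
  then show ?thesis
    by (simp add: hnorm_def real_sqrt_mult)
qed

(* Cauchy-Schwarz for the full complex inner product: rotate y so that the inner product
   becomes real and apply the real-part version. *)
lemma cauchy_schwarz: "cmod (cinner x (y::'a::chilbert)) \<le> hnorm x * hnorm y"
proof (cases "cinner x y = 0")
  case False
  define c where "c = cinner x y"
  define a where "a = cnj c / complex_of_real (cmod c)"
  have "cmod a = 1"
    using False unfolding a_def c_def by (simp add: norm_divide)
  moreover have "a * c = complex_of_real (cmod c)"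
    using False unfolding a_def c_def by (simp add: complex_norm_square[symmetric] field_simps power2_eq_square)
  then have "Re (cinner x (cscale a y)) = cmod c"
    unfolding cinner_cscale_right c_def[symmetric] by simp
  ultimately show ?thesis
    using cauchy_schwarz_Re[of x "cscale a y"] by (simp add: hnorm_cscale c_def)
qed simp


definition hconv :: "(nat \<Rightarrow> 'a::chilbert) \<Rightarrow> 'a \<Rightarrow> bool" where
  "hconv f l \<longleftrightarrow> (\<lambda>n. hnorm (f n - l)) \<longlonglongrightarrow> 0"

lemma hconv_complete:
  assumes "\<And>e. e > 0 \<Longrightarrow> \<exists>K. \<forall>m\<ge>K. \<forall>n\<ge>K. hnorm (f m - f n) < e"
  shows "\<exists>l. hconv f (l::'a::chilbert)"
  using cinner_complete[of f] assms unfolding hconv_def hnorm_def by blast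

lemma hconv_squeeze:
  assumes "\<And>n. hnorm (f n - l) \<le> g n" and "g \<longlonglongrightarrow> 0"
  shows "hconv f (l::'a::chilbert)"
  unfolding hconv_def
  by (rule tendsto_sandwich[of "\<lambda>n. 0" _ sequentially g]) (use assms in auto)

lemma hconv_unique:
  assumes "hconv f a" "hconv f (b::'a::chilbert)"
  shows "a = b"
proof -
  have lim: "(\<lambda>n. hnorm (f n - a) + hnorm (f n - b)) \<longlonglongrightarrow> 0 + 0"
    using assms unfolding hconv_def by (intro tendsto_add)
  have "hnorm (a - b) \<le> hnorm (f n - a) + hnorm (f n - b)" for n
    using hnorm_triangle_diff[of a b "f n"] hnorm_commute[of a "f n"] by linarith
  then have "hnorm (a - b) \<le> 0 + 0"
    by (intro LIMSEQ_le_const[OF lim]) auto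
  then show ?thesis
    using hnorm_nonneg[of "a - b"] by simp
qed

lemma hconv_eventually_const:
  assumes "\<And>n. n \<ge> N \<Longrightarrow> f n = (a::'a::chilbert)"
  shows "hconv f a"
  unfolding hconv_def
  by (rule tendsto_eventually) (use assms in \<open>auto simp: eventually_sequentially\<close>)

lemma hconv_add:
  assumes "hconv f a" "hconv g (b::'a::chilbert)"
  shows "hconv (\<lambda>n. f n + g n) (a + b)"
proof (rule hconv_squeeze)
  show "hnorm (f n + g n - (a + b)) \<le> hnorm (f n - a) + hnorm (g n - b)" for n
    using hnorm_triangle[of "f n - a" "g n - b"] by (simp add: algebra_simps)
  show "(\<lambda>n. hnorm (f n - a) + hnorm (g n - b)) \<longlonglongrightarrow> 0"
    using tendsto_add[OF assms[unfolded hconv_def]] by simp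
qed

lemma hconv_sum:
  assumes "finite A" "\<And>k. k \<in> A \<Longrightarrow> hconv (f k) (l k)"
  shows "hconv (\<lambda>n. \<Sum>k\<in>A. f k n) (\<Sum>k\<in>A. (l k::'a::chilbert))"
  using assms by (induct A rule: finite_induct) (auto intro: hconv_add hconv_eventually_const)

lemma hconv_cscale:
  assumes "hconv f (a::'a::chilbert)"
  shows "hconv (\<lambda>n. cscale c (f n)) (cscale c a)"
proof (rule hconv_squeeze)
  show "hnorm (cscale c (f n) - cscale c a) \<le> cmod c * hnorm (f n - a)" for n
    by (simp add: hnorm_cscale flip: cscale_diff_right)
  show "(\<lambda>n. cmod c * hnorm (f n - a)) \<longlonglongrightarrow> 0"
    using tendsto_mult_right_zero[OF assms[unfolded hconv_def]] .
qed

lemma hconv_cinner: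
  assumes "hconv f (a::'a::chilbert)"
  shows "(\<lambda>n. cinner (f n) y) \<longlonglongrightarrow> cinner a y"
proof -
  have "(\<lambda>n. cinner (f n) y - cinner a y) \<longlonglongrightarrow> 0"
  proof (rule tendsto_norm_zero_cancel, rule tendsto_sandwich[of "\<lambda>n. 0" _ sequentially])
    show "\<forall>\<^sub>F n in sequentially. norm (cinner (f n) y - cinner a y) \<le> hnorm (f n - a) * hnorm y"
      using cauchy_schwarz[of "f n - a" y for n] by (simp add: cinner_diff_left)
    show "(\<lambda>n. hnorm (f n - a) * hnorm y) \<longlonglongrightarrow> 0"
      using tendsto_mult_left_zero[OF assms[unfolded hconv_def]] .
  qed auto
  then show ?thesis
    by (rule LIM_zero_cancel)
qed

lemma hconv_norm_le:
  assumes "hconv f (a::'a::chilbert)" and "\<And>n. hnorm (f n) \<le> c"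
  shows "hnorm a \<le> c"
proof -
  have lim: "(\<lambda>n. c + hnorm (f n - a)) \<longlonglongrightarrow> c + 0"
    using assms(1) unfolding hconv_def by (intro tendsto_add) auto
  have "hnorm a \<le> c + hnorm (f n - a)" for n
    using hnorm_triangle_diff[of a 0 "f n"] assms(2)[of n] hnorm_commute[of "f n" a]
      hnorm_minus[of "f n"] by simp
  then have "hnorm a \<le> c + 0"
    by (intro LIMSEQ_le_const[OF lim]) auto
  then show ?thesis
    by simp
qed


lemma op_add: "bounded_op T \<Longrightarrow> T (x + y) = T x + T (y::'a::chilbert)"
  by (simp add: bounded_op_def)

lemma op_cscale: "bounded_op T \<Longrightarrow> T (cscale a x) = cscale a (T (x::'a::chilbert))"
  by (simp add: bounded_op_def)

lemma op_zero: "bounded_op T \<Longrightarrow> T 0 = (0::'a::chilbert)"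
  using op_add[of T 0 0] by simp

lemma op_diff: "bounded_op T \<Longrightarrow> T (x - y) = T x - T (y::'a::chilbert)"
  using op_add[of T "x - y" y] by (simp add: eq_diff_eq)

lemma op_sum: "bounded_op T \<Longrightarrow> T (sum f A) = (\<Sum>i\<in>A. T (f i::'a::chilbert))"
  by (induct A rule: infinite_finite_induct) (simp_all add: op_zero op_add)

lemma hconv_op:
  assumes T: "bounded_op T" and "hconv f (a::'a::chilbert)"
  shows "hconv (\<lambda>n. T (f n)) (T a)"
proof -
  obtain K where K: "\<And>x. hnorm (T x) \<le> K * hnorm x"
    using T unfolding bounded_op_def by blast
  show ?thesis
  proof (rule hconv_squeeze)
    show "hnorm (T (f n) - T a) \<le> K * hnorm (f n - a)" for n
      using K[of "f n - a"] op_diff[OF T] by simp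
    show "(\<lambda>n. K * hnorm (f n - a)) \<longlonglongrightarrow> 0"
      using tendsto_mult_right_zero[OF assms(2)[unfolded hconv_def]] .
  qed
qed

lemma proj_bounded: "projection P \<Longrightarrow> bounded_op P"
  by (simp add: projection_def)

lemma proj_idem: "projection P \<Longrightarrow> P (P x) = P x"
  by (simp add: projection_def fun_eq_iff)

lemma proj_adj: "projection P \<Longrightarrow> cinner (P x) y = cinner x (P (y::'a::chilbert))"
  by (simp add: projection_def is_adjoint_def)

lemma proj_quadratic: "projection P \<Longrightarrow> cinner x (P x) = cinner (P x) (P (x::'a::chilbert))"
  using proj_adj[of P x "P x"] proj_idem[of P x] by simp

lemma proj_quadratic_nonneg: "projection P \<Longrightarrow> 0 \<le> Re (cinner x (P (x::'a::chilbert)))"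
  using proj_quadratic[of P x] cinner_nonneg[of "P x"] by simp

lemma proj_zero: "projection (\<lambda>x. 0::'a::chilbert)"
proof -
  have "bounded_op (\<lambda>x. 0::'a)"
    unfolding bounded_op_def by (intro conjI allI exI[of _ 0]) simp_all
  then show ?thesis
    unfolding projection_def is_adjoint_def by (simp add: fun_eq_iff)
qed

lemma proj_same_range:
  assumes P: "projection P" and Q: "projection Q" and r: "range P = range (Q::'a::chilbert \<Rightarrow> 'a)"
  shows "P = Q"
proof
  fix x
  have QP: "Q (P y) = P y" and PQ: "P (Q y) = Q y" for y
    using r proj_idem[OF P] proj_idem[OF Q] by (metis rangeE rangeI)+
  have "cinner z (P x) = cinner z (Q x)" for z
  proof -
    have "cinner z (P x) = cinner (P (Q z)) x"
      by (metis QP proj_adj[OF P] proj_adj[OF Q])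
    also have "\<dots> = cinner z (Q x)"
      by (simp add: PQ proj_adj[OF Q])
    finally show ?thesis .
  qed
  then show "P x = Q x"
    by (rule cinner_ext)
qed


(* For a sequence of projections Q j with
   Q i Q j = 0 (i \<noteq> j), the partial sums of sum_j Q j x are orthogonal sums; Pythagoras and
   Bessel's inequality make them Cauchy, and the strong limit is again a projection. *)

context
  fixes Q :: "nat \<Rightarrow> 'a::chilbert \<Rightarrow> 'a"
  assumes proj: "\<And>j. projection (Q j)"
    and orth: "\<And>i j x. i \<noteq> j \<Longrightarrow> Q i (Q j x) = 0"
begin

lemma orth_sum_absorb: "i \<in> A \<Longrightarrow> finite A \<Longrightarrow> Q i (\<Sum>j\<in>A. Q j x) = Q i x"
proof -
  assume "i \<in> A" "finite A"
  have "Q i (\<Sum>j\<in>A. Q j x) = (\<Sum>j\<in>A. Q i (Q j x))"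
    by (rule op_sum[OF proj_bounded[OF proj]])
  also have "\<dots> = (\<Sum>j\<in>A. if j = i then Q i x else 0)"
    by (rule sum.cong) (auto simp: orth proj_idem[OF proj])
  also have "\<dots> = Q i x"
    using \<open>i \<in> A\<close> \<open>finite A\<close> by (simp add: sum.delta')
  finally show ?thesis .
qed

lemma orth_sum_cinner_self:
  "finite A \<Longrightarrow> cinner (\<Sum>j\<in>A. Q j x) (\<Sum>j\<in>A. Q j x) = (\<Sum>j\<in>A. cinner x (Q j x))"
  by (simp add: cinner_sum_left proj_adj[OF proj] orth_sum_absorb)

lemma orth_sum_norm_sq:
  "finite A \<Longrightarrow> (hnorm (\<Sum>j\<in>A. Q j x))^2 = (\<Sum>j\<in>A. Re (cinner x (Q j x)))"
  using orth_sum_cinner_self[of A x] unfolding hnorm_sq by simp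

lemma orth_sum_bessel: "hnorm (\<Sum>j<n. Q j x) \<le> hnorm x"
proof -
  define s where "s = (\<Sum>j<n. Q j x)"
  have "cinner s s = cinner x s"
    unfolding s_def using orth_sum_cinner_self[of "{..<n}" x] by (simp add: cinner_sum_right)
  then have "(hnorm s)^2 \<le> hnorm x * hnorm s"
    using cauchy_schwarz_Re[of x s] by (simp add: hnorm_sq)
  then have "hnorm s * hnorm s \<le> hnorm x * hnorm s"
    by (simp add: power2_eq_square)
  then have "hnorm s \<le> hnorm x"
    using hnorm_nonneg[of s] by (cases "hnorm s = 0") (auto simp: mult_le_cancel_right)
  then show ?thesis
    by (simp add: s_def)
qed

lemma orth_series_summable: "summable (\<lambda>j. Re (cinner x (Q j x)))"
proof (rule summableI_nonneg_bounded)
  show "0 \<le> Re (cinner x (Q j x))" for j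
    by (rule proj_quadratic_nonneg[OF proj])
  show "(\<Sum>j<n. Re (cinner x (Q j x))) \<le> (hnorm x)^2" for n
    using orth_sum_norm_sq[of "{..<n}" x] power_mono[OF orth_sum_bessel[where n=n and x=x] hnorm_nonneg, of 2]
    by simp
qed

lemma orth_series_converges: "\<exists>l. hconv (\<lambda>n. \<Sum>j<n. Q j x) l"
proof (rule hconv_complete)
  fix e :: real
  assume "e > 0"
  then obtain K where K: "\<And>m n. m \<ge> K \<Longrightarrow> norm (\<Sum>j\<in>{m..<n}. Re (cinner x (Q j x))) < e^2"
    using orth_series_summable[of x] unfolding summable_Cauchy by (meson zero_less_power)
  have tail: "hnorm ((\<Sum>j<n. Q j x) - (\<Sum>j<m. Q j x)) < e" if "K \<le> m" "m \<le> n" for m n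
  proof -
    have "(hnorm ((\<Sum>j<n. Q j x) - (\<Sum>j<m. Q j x)))^2 = (\<Sum>j\<in>{m..<n}. Re (cinner x (Q j x)))"
      using orth_sum_norm_sq[of "{m..<n}" x] \<open>m \<le> n\<close>
      by (simp add: sum_diff_nat_ivl[of 0 m n, symmetric] atLeast0LessThan)
    also have "\<dots> < e^2"
      using K[of m n] \<open>K \<le> m\<close> by simp
    finally show ?thesis
      using \<open>e > 0\<close> by (simp add: power_less_imp_less_base)
  qed
  show "\<exists>K. \<forall>m\<ge>K. \<forall>n\<ge>K. hnorm ((\<Sum>j<m. Q j x) - (\<Sum>j<n. Q j x)) < e"
    by (metis tail hnorm_commute nle_le)
qed

lemma orth_series_limit_projection:
  assumes L: "\<And>x. hconv (\<lambda>n. \<Sum>j<n. Q j x) (L x)"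
  shows "projection L"
proof -
  have add: "L (x + y) = L x + L y" for x y
    using L[of "x + y"] hconv_add[OF L[of x] L[of y]]
    by (simp add: op_add[OF proj_bounded[OF proj]] sum.distrib hconv_unique)
  have scale: "L (cscale a x) = cscale a (L x)" for a x
    using L[of "cscale a x"] hconv_cscale[OF L[of x], of a]
    by (simp add: op_cscale[OF proj_bounded[OF proj]] cscale_sum_right hconv_unique)
  have "hnorm (L x) \<le> 1 * hnorm x" for x
    using hconv_norm_le[OF L orth_sum_bessel] by simp
  then have bounded: "bounded_op L"
    unfolding bounded_op_def using add scale by blast
  have adjoint: "cinner (L x) y = cinner x (L y)" for x y
  proof -
    have "cinner (\<Sum>j<n. Q j x) y = cnj (cinner (\<Sum>j<n. Q j y) x)" for n
      by (simp add: cinner_sum_left cinner_sum_right proj_adj[OF proj] flip: cinner_cnj)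
    moreover have "(\<lambda>n. cnj (cinner (\<Sum>j<n. Q j y) x)) \<longlonglongrightarrow> cnj (cinner (L y) x)"
      by (intro tendsto_cnj hconv_cinner L)
    ultimately have "(\<lambda>n. cinner (\<Sum>j<n. Q j x) y) \<longlonglongrightarrow> cinner x (L y)"
      by (simp flip: cinner_cnj)
    then show ?thesis
      using hconv_cinner[OF L[of x]] LIMSEQ_unique by blast
  qed
  have "Q j (L x) = Q j x" for j x
  proof -
    have "hconv (\<lambda>n. Q j (\<Sum>i<n. Q i x)) (Q j (L x))"
      by (rule hconv_op[OF proj_bounded[OF proj] L])
    moreover have "hconv (\<lambda>n. Q j (\<Sum>i<n. Q i x)) (Q j x)"
      by (rule hconv_eventually_const[of "Suc j"]) (simp add: orth_sum_absorb)
    ultimately show ?thesis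
      by (rule hconv_unique)
  qed
  then have "L (L x) = L x" for x
    using L[of "L x"] L[of x] by (simp add: hconv_unique)
  then show ?thesis
    unfolding projection_def is_adjoint_def using bounded adjoint by (auto simp: fun_eq_iff)
qed

lemma orth_series_projection: "\<exists>L. projection L \<and> (\<forall>x. hconv (\<lambda>n. \<Sum>j<n. Q j x) (L x))"
proof -
  obtain L where "\<forall>x. hconv (\<lambda>n. \<Sum>j<n. Q j x) (L x)"
    using choice[of "\<lambda>x l. hconv (\<lambda>n. \<Sum>j<n. Q j x) l"] orth_series_converges by blast
  then show ?thesis
    using orth_series_limit_projection by blast
qed

end


(* Orthogonal projection onto a closed subspace, obtained from the nearest-point property of
   Hilbert spaces.  Since range_proj T is defined as the unique projection whose range is the
   closure of the range of T, this is what makes range projections meaningful. *)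

definition closed_subspace :: "'a::chilbert set \<Rightarrow> bool" where
  "closed_subspace S \<longleftrightarrow> 0 \<in> S \<and> (\<forall>x\<in>S. \<forall>y\<in>S. x + y \<in> S) \<and> (\<forall>a. \<forall>x\<in>S. cscale a x \<in> S)
     \<and> hclosure S \<subseteq> S"

lemma closed_subspaceD:
  assumes "closed_subspace S"
  shows closed_subspace_zero: "0 \<in> S"
    and closed_subspace_add: "x \<in> S \<Longrightarrow> y \<in> S \<Longrightarrow> x + y \<in> S"
    and closed_subspace_cscale: "x \<in> S \<Longrightarrow> cscale a x \<in> S"
    and closed_subspace_closed: "x \<in> hclosure S \<Longrightarrow> x \<in> S"
  using assms unfolding closed_subspace_def by auto

lemma quadratic_nonneg_imp_linear_zero:
  fixes B C :: real
  assumes nonneg: "\<And>r. 0 \<le> r^2 * C - 2 * r * B" and "0 \<le> C"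
  shows "B = 0"
proof -
  define r where "r = B / (C + 1)"
  have "0 \<le> r^2 * C - 2 * r * B"
    by (rule nonneg)
  also have "\<dots> = - (B^2 * (C + 2)) / (C + 1)^2"
    using \<open>0 \<le> C\<close> unfolding r_def by (simp add: add_nonneg_eq_0_iff field_simps power2_eq_square)
  finally have "B^2 * (C + 2) \<le> 0"
    using \<open>0 \<le> C\<close> by (simp add: divide_le_0_iff)
  then show ?thesis
    using \<open>0 \<le> C\<close> by (simp add: mult_le_0_iff)
qed

(* A nearest point p of S to x makes x - p orthogonal to S: moving p along any s \<in> S cannot
   decrease the distance, first to real, then (rotating s by i) to complex precision. *)
lemma nearest_point_orthogonal:
  assumes S: "closed_subspace S" and p: "p \<in> S"
    and nearest: "\<And>s. s \<in> S \<Longrightarrow> hnorm (x - p) \<le> hnorm (x - s)" and s: "s \<in> S"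
  shows "cinner s (x - p) = 0"
proof -
  have Re_zero: "Re (cinner t (x - p)) = 0" if t: "t \<in> S" for t
  proof (rule quadratic_nonneg_imp_linear_zero)
    show "0 \<le> r^2 * Re (cinner t t) - 2 * r * Re (cinner t (x - p))" for r
    proof -
      have "hnorm (x - p) \<le> hnorm ((x - p) - cscale (complex_of_real r) t)"
        using nearest[OF closed_subspace_add[OF S p closed_subspace_cscale[OF S t]]]
        by (simp only: diff_diff_eq)
      then show ?thesis
        using hnorm_sq_mono expand_diff[of "x - p" r t] Re_cinner_commute[of t "x - p"] by fastforce
    qed
  qed (rule cinner_nonneg)
  have "Re (cinner (cscale \<i> s) (x - p)) = 0"
    by (rule Re_zero[OF closed_subspace_cscale[OF S s]])
  then have "Im (cinner s (x - p)) = 0"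
    by (simp add: cinner_cscale_left)
  then show ?thesis
    using Re_zero[OF s] by (simp add: complex_eq_iff)
qed

(* Parallelogram estimate: two almost-nearest points of a subspace are close to each other. *)
lemma almost_nearest_close:
  assumes S: "closed_subspace S" and s: "s \<in> S" and t: "t \<in> S"
    and d: "0 \<le> d" "\<And>z. z \<in> S \<Longrightarrow> d \<le> hnorm (x - z)"
    and \<delta>: "0 < \<delta>" "\<delta> \<le> 1" and near: "hnorm (x - s) < d + \<delta>" "hnorm (x - t) < d + \<delta>"
  shows "(hnorm (s - t))^2 \<le> 4 * \<delta> * (2 * d + 1)"
proof -
  define u v where "u = x - t" and "v = x - s"
  have "cscale (1/2) (t + s) \<in> S"
    by (intro closed_subspace_cscale[OF S] closed_subspace_add[OF S] s t)
  moreover have "u + v = cscale 2 (x - cscale (1/2) (t + s))"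
    unfolding u_def v_def cscale_diff_right cscale_cscale cscale_two
    by (simp add: cscale_one algebra_simps)
  ultimately have mid: "(2 * d)^2 \<le> (hnorm (u + v))^2"
    using d by (intro power_mono) (auto simp: hnorm_cscale)
  have "(hnorm u)^2 \<le> (d + \<delta>)^2" "(hnorm v)^2 \<le> (d + \<delta>)^2"
    using near d \<delta> unfolding u_def v_def by (auto intro!: power_mono)
  moreover have "(hnorm (s - t))^2 = 2 * (hnorm u)^2 + 2 * (hnorm v)^2 - (hnorm (u + v))^2"
    using parallelogram[of u v] unfolding hnorm_sq u_def v_def by (simp add: algebra_simps)
  ultimately have "(hnorm (s - t))^2 \<le> 4 * (d + \<delta>)^2 - (2 * d)^2"
    using mid by linarith
  also have "\<dots> = 4 * \<delta> * (2 * d) + 4 * \<delta> * \<delta>"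
    by (simp add: power2_eq_square algebra_simps)
  also have "\<dots> \<le> 4 * \<delta> * (2 * d) + 4 * \<delta> * 1"
    using \<delta> by (intro add_left_mono mult_left_mono) auto
  finally show ?thesis
    by (simp add: algebra_simps)
qed

lemma hconv_in_hclosure:
  assumes "\<And>n. s n \<in> S" and "hconv s p"
  shows "p \<in> hclosure S"
  unfolding hclosure_def
proof (intro CollectI allI impI)
  fix e :: real
  assume "e > 0"
  then obtain n where "hnorm (s n - p) < e"
    using order_tendstoD(2)[OF assms(2)[unfolded hconv_def]] by (auto simp: eventually_sequentially)
  then show "\<exists>y\<in>S. hnorm (p - y) < e"
    using assms(1) hnorm_commute by metis
qed

lemma minimizing_sequence_converges:
  assumes S: "closed_subspace S" and d: "0 \<le> d" "\<And>z. z \<in> S \<Longrightarrow> d \<le> hnorm (x - z)"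
    and s: "\<And>n. s n \<in> S" and near: "\<And>n. hnorm (x - s n) < d + inverse (real (Suc n))"
  shows "\<exists>p. hconv s p"
proof (rule hconv_complete)
  fix e :: real
  assume "e > 0"
  obtain K where K: "4 * (2 * d + 1) / e^2 < real (Suc K)"
    using reals_Archimedean2 less_Suc_eq by (metis of_nat_Suc add.commute less_add_one less_trans)
  define \<delta> where "\<delta> = inverse (real (Suc K))"
  have \<delta>: "0 < \<delta>" "\<delta> \<le> 1" "4 * (2 * d + 1) * \<delta> < e^2"
    using K \<open>e > 0\<close> unfolding \<delta>_def by (auto simp: field_simps)
  have "hnorm (s m - s n) < e" if "m \<ge> K" "n \<ge> K" for m n
  proof -
    have "inverse (real (Suc m)) \<le> \<delta>" "inverse (real (Suc n)) \<le> \<delta>"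
      unfolding \<delta>_def using that by (auto simp: field_simps)
    then have "(hnorm (s m - s n))^2 \<le> 4 * \<delta> * (2 * d + 1)"
      using near[of m] near[of n] by (intro almost_nearest_close[OF S s s d \<delta>(1,2)]) auto
    also have "\<dots> < e^2"
      using \<delta>(3) by (simp add: algebra_simps)
    finally show ?thesis
      using \<open>e > 0\<close> by (simp add: power_less_imp_less_base)
  qed
  then show "\<exists>K. \<forall>m\<ge>K. \<forall>n\<ge>K. hnorm (s m - s n) < e"
    by blast
qed

lemma nearest_point_exists:
  assumes S: "closed_subspace S"
  shows "\<exists>p\<in>S. \<forall>s\<in>S. hnorm (x - p) \<le> hnorm (x - s)"
proof -
  define d where "d = Inf ((\<lambda>s. hnorm (x - s)) ` S)"
  have "0 \<in> S"
    by (rule closed_subspace_zero[OF S])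
  then have d_le: "d \<le> hnorm (x - s)" if "s \<in> S" for s
    unfolding d_def using that by (intro cInf_lower) (auto intro: bdd_belowI[of _ 0])
  have d0: "0 \<le> d"
    unfolding d_def using \<open>0 \<in> S\<close> by (intro cInf_greatest) auto
  have "\<exists>s\<in>S. hnorm (x - s) < d + inverse (real (Suc n))" for n
    using cInf_lessD[of "(\<lambda>s. hnorm (x - s)) ` S" "d + inverse (real (Suc n))"] \<open>0 \<in> S\<close>
    unfolding d_def by auto
  then obtain s where s: "\<And>n. s n \<in> S" and near: "\<And>n. hnorm (x - s n) < d + inverse (real (Suc n))"
    by metis
  then obtain p where p: "hconv s p"
    using minimizing_sequence_converges[OF S d0 d_le] by blast
  then have "p \<in> S"
    using closed_subspace_closed[OF S] hconv_in_hclosure[of s S p] s by blast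
  have lim: "(\<lambda>n. d + inverse (real (Suc n)) + hnorm (s n - p)) \<longlonglongrightarrow> d + 0 + 0"
    using p unfolding hconv_def by (intro tendsto_add tendsto_const LIMSEQ_inverse_real_of_nat)
  have "hnorm (x - p) \<le> d + inverse (real (Suc n)) + hnorm (s n - p)" for n
    using hnorm_triangle_diff[of x p "s n"] near[of n] by linarith
  then have "hnorm (x - p) \<le> d"
    using LIMSEQ_le_const[OF lim] by fastforce
  then show ?thesis
    using \<open>p \<in> S\<close> d_le by force
qed

lemma orthogonal_decomposition_unique:
  assumes S: "closed_subspace S"
    and q: "q \<in> S" "\<And>s. s \<in> S \<Longrightarrow> cinner s (x - q) = 0"
    and p: "p \<in> S" "\<And>s. s \<in> S \<Longrightarrow> cinner s (x - p) = 0"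
  shows "q = p"
proof -
  have "q + cscale (-1) p \<in> S"
    by (intro closed_subspace_add[OF S] closed_subspace_cscale[OF S] p(1) q(1))
  moreover have "cscale (-1) p = - p"
    using cscale_add_left[of "-1" 1 p] by (simp add: cscale_one eq_neg_iff_add_eq_0)
  ultimately have "cinner (q - p) (x - p) - cinner (q - p) (x - q) = 0"
    using p(2) q(2) by simp
  then have "cinner (q - p) (q - p) = 0"
    by (simp add: cinner_diff_right[symmetric])
  then show ?thesis
    using cinner_eq_zero by force
qed

(* An operator P giving the orthogonal decomposition with respect to S is linear (by uniqueness
   of the decomposition) and contractive (by Pythagoras). *)
lemma orthogonal_decomposition_bounded:
  assumes S: "closed_subspace S"
    and PS: "\<And>x. P x \<in> S" and perp: "\<And>x s. s \<in> S \<Longrightarrow> cinner s (x - P x) = 0"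
  shows "bounded_op P"
proof -
  have add: "P (x + y) = P x + P y" for x y
  proof (rule orthogonal_decomposition_unique[OF S PS perp])
    show "P x + P y \<in> S"
      by (intro closed_subspace_add[OF S] PS)
    have split: "x + y - (P x + P y) = (x - P x) + (y - P y)"
      by (simp add: algebra_simps)
    show "cinner s (x + y - (P x + P y)) = 0" if "s \<in> S" for s
      unfolding split cinner_add_right using perp[OF that] by simp
  qed
  have scale: "P (cscale a x) = cscale a (P x)" for a x
  proof (rule orthogonal_decomposition_unique[OF S PS perp])
    show "cscale a (P x) \<in> S"
      by (intro closed_subspace_cscale[OF S] PS)
    show "cinner s (cscale a x - cscale a (P x)) = 0" if "s \<in> S" for s
      using perp[OF that] by (simp add: cinner_cscale_right flip: cscale_diff_right)
  qed
  have "hnorm (P x) \<le> 1 * hnorm x" for x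
  proof -
    have "Re (cinner x x) = Re (cinner (P x) (P x)) + 2 * Re (cinner (P x) (x - P x))
        + Re (cinner (x - P x) (x - P x))"
      using expand_add[of "P x" "x - P x"] by simp
    then have "(hnorm (P x))^2 \<le> (hnorm x)^2"
      using perp[OF PS, of x] cinner_nonneg[of "x - P x"] by (simp add: hnorm_sq)
    then show ?thesis
      using power2_le_imp_le by simp
  qed
  then show ?thesis
    unfolding bounded_op_def using add scale by blast
qed

lemma orthogonal_decomposition_projection:
  assumes S: "closed_subspace S"
    and PS: "\<And>x. P x \<in> S" and perp: "\<And>x s. s \<in> S \<Longrightarrow> cinner s (x - P x) = 0"
  shows "projection P \<and> range P = S"
proof -
  have fixed: "P p = p" if "p \<in> S" for p
    using orthogonal_decomposition_unique[OF S PS perp that] by simp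
  have "cinner (P x) y = cinner x (P y)" for x y
  proof -
    have "cinner (x - P x) (P y) = 0"
      using perp[OF PS, of y x] cinner_cnj[of "x - P x" "P y"] by simp
    then show ?thesis
      using perp[OF PS, of x y] by (simp add: cinner_diff_left cinner_diff_right)
  qed
  moreover have "range P = S"
  proof
    show "range P \<subseteq> S"
      using PS by blast
    show "S \<subseteq> range P"
      using fixed rangeI[of P] by (metis subsetI)
  qed
  moreover have "P \<circ> P = P"
    using fixed PS by (simp add: fun_eq_iff)
  ultimately show ?thesis
    using orthogonal_decomposition_bounded[OF S PS perp]
    unfolding projection_def is_adjoint_def by blast
qed

lemma closed_subspace_projection:
  assumes S: "closed_subspace (S::'a::chilbert set)"
  shows "\<exists>P. projection P \<and> range P = S"
proof -
  have "\<exists>p. p \<in> S \<and> (\<forall>s\<in>S. cinner s (x - p) = 0)" for x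
  proof -
    obtain p where "p \<in> S" and "\<And>s. s \<in> S \<Longrightarrow> hnorm (x - p) \<le> hnorm (x - s)"
      using nearest_point_exists[OF S, of x] by blast
    then show ?thesis
      using nearest_point_orthogonal[OF S] by blast
  qed
  then have "\<exists>P. \<forall>x. P x \<in> S \<and> (\<forall>s\<in>S. cinner s (x - P x) = 0)"
    by (intro choice allI)
  then obtain P where "\<And>x. P x \<in> S" and "\<And>x s. s \<in> S \<Longrightarrow> cinner s (x - P x) = 0"
    by blast
  then have "projection P \<and> range P = S"
    by (rule orthogonal_decomposition_projection[OF S])
  then show ?thesis
    by blast
qed

lemma hclosure_rangeE:
  assumes "x \<in> hclosure (range T)" and "e > 0"
  obtains u where "hnorm (x - T u) < e"
  using assms unfolding hclosure_def by blast

lemma hclosure_range_add: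
  assumes T: "bounded_op T" and x: "x \<in> hclosure (range T)" and y: "y \<in> hclosure (range T)"
  shows "x + y \<in> hclosure (range T)"
  unfolding hclosure_def
proof (intro CollectI allI impI)
  fix e :: real assume "e > 0"
  obtain u where u: "hnorm (x - T u) < e/2"
    by (rule hclosure_rangeE[OF x, of "e/2"]) (use \<open>e > 0\<close> in simp)
  obtain v where v: "hnorm (y - T v) < e/2"
    by (rule hclosure_rangeE[OF y, of "e/2"]) (use \<open>e > 0\<close> in simp)
  have "x + y - T (u + v) = (x - T u) + (y - T v)"
    by (simp add: op_add[OF T] algebra_simps)
  then have "hnorm (x + y - T (u + v)) \<le> hnorm (x - T u) + hnorm (y - T v)"
    by (metis hnorm_triangle)
  then have "hnorm (x + y - T (u + v)) < e"
    using u v by linarith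
  then show "\<exists>z\<in>range T. hnorm (x + y - z) < e"
    by (intro bexI[OF _ rangeI])
qed

lemma hclosure_range_cscale:
  assumes T: "bounded_op T" and x: "x \<in> hclosure (range T)"
  shows "cscale a x \<in> hclosure (range T)"
  unfolding hclosure_def
proof (intro CollectI allI impI)
  fix e :: real assume "e > 0"
  have pos: "cmod a + 1 > 0"
    by (simp add: add_nonneg_pos)
  obtain u where u: "hnorm (x - T u) < e / (cmod a + 1)"
    by (rule hclosure_rangeE[OF x, of "e / (cmod a + 1)"]) (use \<open>e > 0\<close> pos in simp)
  have "hnorm (cscale a x - T (cscale a u)) = cmod a * hnorm (x - T u)"
    by (simp add: op_cscale[OF T] hnorm_cscale flip: cscale_diff_right)
  also have "\<dots> \<le> cmod a * (e / (cmod a + 1))"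
    using u by (intro mult_left_mono) auto
  also have "\<dots> < e"
    using \<open>e > 0\<close> pos by (simp add: divide_less_eq algebra_simps)
  finally show "\<exists>z\<in>range T. hnorm (cscale a x - z) < e"
    by (intro bexI[OF _ rangeI])
qed

lemma hclosure_range_closed:
  assumes x: "x \<in> hclosure (hclosure (range T))"
  shows "x \<in> hclosure (range T)"
  unfolding hclosure_def
proof (intro CollectI allI impI)
  fix e :: real assume "e > 0"
  then have "\<exists>y\<in>hclosure (range T). hnorm (x - y) < e/2"
    using x unfolding hclosure_def[of "hclosure (range T)"] by (simp del: divide_const_simps)
  then obtain y where y: "y \<in> hclosure (range T)" "hnorm (x - y) < e/2"
    by blast
  obtain u where "hnorm (y - T u) < e/2"
    by (rule hclosure_rangeE[OF y(1), of "e/2"]) (use \<open>e > 0\<close> in simp)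
  then have "hnorm (x - T u) < e"
    using y(2) hnorm_triangle_diff[of x "T u" y] by linarith
  then show "\<exists>z\<in>range T. hnorm (x - z) < e"
    by (intro bexI[OF _ rangeI])
qed

lemma closure_of_range_closed_subspace:
  assumes T: "bounded_op (T::'a::chilbert \<Rightarrow> 'a)"
  shows "closed_subspace (hclosure (range T))"
proof -
  have "hnorm (0 - T 0) < e" if "e > 0" for e
    using that by (simp add: op_zero[OF T])
  then have "0 \<in> hclosure (range T)"
    unfolding hclosure_def by blast
  then show ?thesis
    unfolding closed_subspace_def
    using hclosure_range_add[OF T] hclosure_range_cscale[OF T] hclosure_range_closed by blast
qed

lemma range_proj_props:
  assumes "bounded_op (T::'a::chilbert \<Rightarrow> 'a)"
  shows "projection (range_proj T)" and "range (range_proj T) = hclosure (range T)"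
proof -
  obtain P where P: "projection P" "range P = hclosure (range T)"
    using closed_subspace_projection[OF closure_of_range_closed_subspace[OF assms]] by blast
  have "\<exists>!P. projection P \<and> range P = hclosure (range T)"
  proof (rule ex1I)
    show "projection P \<and> range P = hclosure (range T)"
      using P by simp
    show "Q = P" if "projection Q \<and> range Q = hclosure (range T)" for Q
      using proj_same_range[of Q P] that P by simp
  qed
  then have "projection (range_proj T) \<and> range (range_proj T) = hclosure (range T)"
    unfolding range_proj_def by (rule theI')
  then show "projection (range_proj T)" "range (range_proj T) = hclosure (range T)"
    by auto
qed


(* Summands of a sum of projections lie under its range projection.  If T = sum_k Q k and
   u \<perp> range T, then 0 = <u, T u> = sum_k |Q k u|^2, so every Q k vanishes where R does. *)

lemma sum_of_projections_quadratic_zero: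
  fixes Q :: "nat \<Rightarrow> 'a::chilbert \<Rightarrow> 'a"
  assumes proj: "\<And>k. k < n \<Longrightarrow> projection (Q k)"
    and zero: "cinner u (\<Sum>k<n. Q k u) = 0" and "k < n"
  shows "Q k u = 0"
proof -
  have nonneg: "0 \<le> Re (cinner u (Q j u))" if "j \<in> {..<n}" for j
    using proj_quadratic_nonneg[OF proj] that by simp
  have "(\<Sum>j<n. Re (cinner u (Q j u))) = 0"
    using arg_cong[OF zero, of Re] by (simp add: cinner_sum_right)
  moreover have "(\<Sum>j<n. Re (cinner u (Q j u))) = 0 \<longleftrightarrow> (\<forall>j\<in>{..<n}. Re (cinner u (Q j u)) = 0)"
    using nonneg by (intro sum_nonneg_eq_0_iff) auto
  ultimately have "\<forall>j\<in>{..<n}. Re (cinner u (Q j u)) = 0"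
    by blast
  then have "Re (cinner u (Q k u)) = 0"
    using \<open>k < n\<close> by simp
  then show ?thesis
    using proj_quadratic[OF proj[OF \<open>k < n\<close>]] Re_cinner_self_eq_0 by metis
qed

lemma summand_below_projection:
  fixes R T :: "'a::chilbert \<Rightarrow> 'a" and Q :: "nat \<Rightarrow> 'a \<Rightarrow> 'a"
  assumes R: "projection R" and proj: "\<And>k. k < n \<Longrightarrow> projection (Q k)"
    and T: "\<And>x. T x = (\<Sum>k<n. Q k x)" and range: "\<And>x. T x \<in> range R" and "k < n"
  shows "Q k z = R (Q k z)"
proof -
  have Qk: "projection (Q k)"
    using proj \<open>k < n\<close> .
  have kernel: "Q k (y - R y) = 0" for y
  proof (rule sum_of_projections_quadratic_zero[OF proj _ \<open>k < n\<close>])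
    obtain w where "T (y - R y) = R w"
      using range[of "y - R y"] by blast
    then show "cinner (y - R y) (\<Sum>k<n. Q k (y - R y)) = 0"
      by (simp flip: T add: cinner_diff_left proj_adj[OF R] proj_idem[OF R])
  qed
  have QR: "Q k y = Q k (R y)" for y
    using op_diff[OF proj_bounded[OF Qk], of y "R y"] kernel by simp
  show ?thesis
  proof (rule cinner_ext)
    fix w
    have "cinner w (Q k z) = cinner (Q k (R w)) z"
      by (simp add: proj_adj[OF Qk] flip: QR)
    also have "\<dots> = cinner w (R (Q k z))"
      by (simp add: proj_adj[OF Qk] proj_adj[OF R])
    finally show "cinner w (Q k z) = cinner w (R (Q k z))" .
  qed
qed

lemma range_below_range_proj:
  assumes "bounded_op T"
  shows "T x \<in> range (range_proj T)"
proof -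
  have "\<forall>e>0. \<exists>y\<in>range T. hnorm (T x - y) < e"
  proof (intro allI impI bexI)
    show "hnorm (T x - T x) < e" if "e > 0" for e :: real
      using that by simp
  qed (rule rangeI)
  then have "T x \<in> hclosure (range T)"
    unfolding hclosure_def by blast
  then show ?thesis
    using range_proj_props(2)[OF assms] by simp
qed

lemma orthogonal_below_orthogonal:
  fixes A B RA RB :: "'a::chilbert \<Rightarrow> 'a"
  assumes A: "projection A" and B: "projection B" and RB: "projection RB"
    and AR: "\<And>z. A z = RA (A z)" and BR: "\<And>z. B z = RB (B z)"
    and RR: "RB \<circ> RA = (\<lambda>x. 0)"
  shows "A (B x) = 0"
proof -
  define v where "v = A (B x)"
  have "cinner v v = cinner (RB (B x)) (RA (A v))"
    unfolding v_def by (simp add: proj_adj[OF A] flip: AR BR)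
  also have "\<dots> = cinner (B x) ((RB \<circ> RA) (A v))"
    by (simp add: proj_adj[OF RB])
  also have "\<dots> = 0"
    by (simp add: RR)
  finally show ?thesis
    unfolding v_def using cinner_eq_zero by blast
qed


lemma vna_zero:
  assumes "von_neumann_algebra M"
  shows "(\<lambda>x. 0::'a::chilbert) \<in> M"
proof -
  have "(\<lambda>x. cscale 0 (id x)) \<in> M"
    using assms unfolding von_neumann_algebra_def by blast
  then show ?thesis
    by simp
qed

lemma vna_add: "von_neumann_algebra M \<Longrightarrow> S \<in> M \<Longrightarrow> T \<in> M \<Longrightarrow> (\<lambda>x. S x + T x) \<in> M"
  unfolding von_neumann_algebra_def by simp

lemma vna_sum:
  assumes M: "von_neumann_algebra M" and "finite A" and "\<And>j. j \<in> A \<Longrightarrow> S j \<in> M"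
  shows "(\<lambda>x. \<Sum>j\<in>A. S j x) \<in> M"
  using assms(2,3)
proof (induct A rule: finite_induct)
  case empty
  then show ?case
    using vna_zero[OF M] by simp
next
  case (insert a A)
  then have "(\<lambda>x. S a x + (\<Sum>j\<in>A. S j x)) \<in> M"
    by (intro vna_add[OF M]) auto
  then show ?case
    using insert by simp
qed

lemma vna_strong_limit:
  assumes M: "von_neumann_algebra M" and L: "bounded_op L" and S: "\<And>n. S n \<in> M"
    and conv: "\<And>x. hconv (\<lambda>n. S n x) (L x)"
  shows "L \<in> M"
proof -
  have "\<exists>T\<in>M. \<forall>x\<in>F. hnorm (L x - T x) < e" if "finite F" "e > 0" for F e
  proof -
    have "\<forall>x\<in>F. eventually (\<lambda>n. hnorm (S n x - L x) < e) sequentially"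
      using order_tendstoD(2)[OF conv[unfolded hconv_def] \<open>e > 0\<close>] by blast
    then have "eventually (\<lambda>n. \<forall>x\<in>F. hnorm (S n x - L x) < e) sequentially"
      by (rule eventually_ball_finite[OF \<open>finite F\<close>])
    then obtain n where "\<forall>x\<in>F. hnorm (S n x - L x) < e"
      unfolding eventually_sequentially by blast
    then have "\<forall>x\<in>F. hnorm (L x - S n x) < e"
      using hnorm_commute by metis
    then show ?thesis
      using S[of n] by blast
  qed
  moreover have "sot_closed M"
    using M unfolding von_neumann_algebra_def by simp
  ultimately show ?thesis
    using L unfolding sot_closed_def by blast
qed

lemma vna_orthogonal_series:
  assumes M: "von_neumann_algebra M" and Q: "\<And>j. Q j \<in> M" "\<And>j. projection (Q j)"
    and orth: "\<And>i j x. i \<noteq> j \<Longrightarrow> Q i (Q j x) = 0"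
  shows "\<exists>L. L \<in> M \<and> projection L \<and> (\<forall>x. hconv (\<lambda>n. \<Sum>j<n. Q j x) (L x))"
proof -
  obtain L where L: "projection L" "\<And>x. hconv (\<lambda>n. \<Sum>j<n. Q j x) (L x)"
    using orth_series_projection[of Q, OF Q(2) orth] by blast
  have "L \<in> M"
  proof (rule vna_strong_limit[OF M proj_bounded[OF L(1)]])
    show "(\<lambda>x. \<Sum>j<n. Q j x) \<in> M" for n
      using vna_sum[OF M, of "{..<n}" Q] Q(1) by simp
  qed (rule L(2))
  then show ?thesis
    using L by blast
qed


lemma padded_projection_decomposition:
  assumes M: "von_neumann_algebra M" and T: "bounded_op T"
    and sum: "sum_of_projections M n T" and "n \<le> N"
  shows "\<exists>P. (\<forall>k. P k \<in> M \<and> projection (P k) \<and> (\<forall>z. P k z = range_proj T (P k z)))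
    \<and> T = (\<lambda>x. \<Sum>k<N. P k x)"
proof -
  obtain Q where Q: "\<And>k. k < n \<Longrightarrow> Q k \<in> M \<and> projection (Q k)" and T_sum: "T = (\<lambda>x. \<Sum>k<n. Q k x)"
    using sum unfolding sum_of_projections_def by blast
  define P where "P k = (if k < n then Q k else (\<lambda>x. 0))" for k
  have "P k \<in> M \<and> projection (P k)" for k
    unfolding P_def using Q vna_zero[OF M] proj_zero by auto
  moreover have "P k z = range_proj T (P k z)" for k z
  proof (cases "k < n")
    case True
    then show ?thesis
      unfolding P_def
      using summand_below_projection[OF range_proj_props(1)[OF T], of n Q T k z] Q T_sum
        range_below_range_proj[OF T] by auto
  next
    case False
    then show ?thesis
      unfolding P_def using op_zero[OF proj_bounded[OF range_proj_props(1)[OF T]]] by simp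
  qed
  moreover have "T = (\<lambda>x. \<Sum>k<N. P k x)"
  proof
    fix x
    have "(\<Sum>k<N. P k x) = (\<Sum>k<N. if k < n then Q k x else 0)"
      unfolding P_def by (rule sum.cong) auto
    also have "\<dots> = (\<Sum>k\<in>{k\<in>{..<N}. k < n}. Q k x)"
      by (rule sum.inter_filter[OF finite_lessThan, symmetric])
    also have "{k\<in>{..<N}. k < n} = {..<n}"
      using \<open>n \<le> N\<close> by auto
    finally show "T x = (\<Sum>k<N. P k x)"
      by (simp add: T_sum)
  qed
  ultimately show ?thesis
    by (intro exI[of _ P]) blast
qed

(* Splitting a sequence of projections by the parity of the index: non-adjacent
   orthogonality becomes full orthogonality within each parity class. *)

definition parity_part :: "nat \<Rightarrow> (nat \<Rightarrow> 'a \<Rightarrow> 'a::chilbert) \<Rightarrow> nat \<Rightarrow> 'a \<Rightarrow> 'a" where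
  "parity_part p Q j = (if j mod 2 = p then Q j else (\<lambda>x. 0))"

lemma parity_part_split: "Q j x = parity_part 0 Q j x + parity_part 1 Q j x"
  unfolding parity_part_def by (cases "even j") auto

lemma parity_part_projection: "projection (Q j) \<Longrightarrow> projection (parity_part p Q j)"
  unfolding parity_part_def using proj_zero by auto

lemma parity_part_in_vna: "von_neumann_algebra M \<Longrightarrow> Q j \<in> M \<Longrightarrow> parity_part p Q j \<in> M"
  unfolding parity_part_def using vna_zero by auto

lemma parity_part_orthogonal:
  assumes proj: "\<And>j. projection (Q j)"
    and orth: "\<And>i j x. i > j + 1 \<or> j > i + 1 \<Longrightarrow> Q i (Q j x) = 0" and "i \<noteq> j"
  shows "parity_part p Q i (parity_part p Q j x) = 0"
proof (cases "i mod 2 = p \<and> j mod 2 = p")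
  case True
  then have "i > j + 1 \<or> j > i + 1"
    using \<open>i \<noteq> j\<close> by presburger
  then show ?thesis
    unfolding parity_part_def using True orth by simp
next
  case False
  then show ?thesis
    unfolding parity_part_def using op_zero[OF proj_bounded[OF proj]] by auto
qed

lemma sum_of_projections_interleave:
  fixes L :: "nat \<Rightarrow> nat \<Rightarrow> 'a::chilbert \<Rightarrow> 'a"
  assumes "\<And>p k. L p k \<in> M \<and> projection (L p k)"
  shows "sum_of_projections M (2 * N) (\<lambda>x. \<Sum>k<N. L 0 k x + L 1 k x)"
proof -
  define P where "P i = L (i mod 2) (i div 2)" for i
  have "(\<Sum>i<2 * N. P i x) = (\<Sum>k<N. L 0 k x + L 1 k x)" for x
    by (induct N) (simp_all add: P_def algebra_simps mod_Suc)
  then show ?thesis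
    unfolding sum_of_projections_def using assms by (intro exI[of _ P]) (auto simp: P_def)
qed

lemma adjacent_orthogonal_series:
  assumes M: "von_neumann_algebra M" and P: "\<And>j k. P j k \<in> M \<and> projection (P j k)"
    and orth: "\<And>i j k x. i > j + 1 \<or> j > i + 1 \<Longrightarrow> P i k (P j k x) = 0"
  shows "\<exists>B. sot_sums (\<lambda>j x. \<Sum>k<N. P j k x) B \<and> sum_of_projections M (2 * N) B"
proof -
  let ?C = "\<lambda>p k. parity_part p (\<lambda>j. P j k)"
  have "\<exists>L. L \<in> M \<and> projection L \<and> (\<forall>x. hconv (\<lambda>n. \<Sum>j<n. ?C p k j x) (L x))" for p k
    using P orth by (intro vna_orthogonal_series[OF M] parity_part_in_vna[OF M]
        parity_part_projection parity_part_orthogonal) auto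
  then obtain L where L: "\<And>p k. L p k \<in> M \<and> projection (L p k)"
    and conv: "\<And>p k x. hconv (\<lambda>n. \<Sum>j<n. ?C p k j x) (L p k x)"
    by metis
  have "hconv (\<lambda>n. \<Sum>j<n. \<Sum>k<N. P j k x) (\<Sum>k<N. L 0 k x + L 1 k x)" for x
  proof -
    have "(\<Sum>j<n. \<Sum>k<N. P j k x) = (\<Sum>k<N. \<Sum>j<n. ?C 0 k j x + ?C 1 k j x)" for n
      by (subst sum.swap) (simp only: flip: parity_part_split)
    then have "(\<Sum>j<n. \<Sum>k<N. P j k x) = (\<Sum>k<N. (\<Sum>j<n. ?C 0 k j x) + (\<Sum>j<n. ?C 1 k j x))" for n
      by (simp only: sum.distrib)
    moreover have "hconv (\<lambda>n. \<Sum>k<N. (\<Sum>j<n. ?C 0 k j x) + (\<Sum>j<n. ?C 1 k j x))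
        (\<Sum>k<N. L 0 k x + L 1 k x)"
      by (intro hconv_sum hconv_add conv) simp
    ultimately show ?thesis
      by simp
  qed
  then show ?thesis
    unfolding sot_sums_def hconv_def using sum_of_projections_interleave[of L M N, OF L]
    by (intro exI[of _ "\<lambda>x. \<Sum>k<N. L 0 k x + L 1 k x"]) auto
qed


theorem lemma4p1:
  fixes M :: "('a::chilbert \<Rightarrow> 'a) set"
    and b :: "nat \<Rightarrow> 'a \<Rightarrow> 'a"
    and Nj :: "nat \<Rightarrow> nat"
  assumes "von_neumann_algebra M"
    and "\<forall>j. b j \<in> M \<and> positive_op (b j)"
    and "\<forall>i j. (i > j + 1 \<or> j > i + 1) \<longrightarrow> range_proj (b i) \<circ> range_proj (b j) = (\<lambda>x. 0)"
    and "\<forall>j. sum_of_projections M (Nj j) (b j)"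
    and "bdd_above (range Nj)"
  shows "\<exists>B. sot_sums b B \<and> sum_of_projections M (2 * Sup (range Nj)) B"
proof -
  define N where "N = Sup (range Nj)"
  have bounded: "bounded_op (b j)" for j
    using assms(2) unfolding positive_op_def by blast
  have "Nj j \<le> N" for j
    unfolding N_def using assms(5) by (intro cSup_upper) auto
  then have "\<exists>P. (\<forall>k. P k \<in> M \<and> projection (P k) \<and> (\<forall>z. P k z = range_proj (b j) (P k z)))
      \<and> b j = (\<lambda>x. \<Sum>k<N. P k x)" for j
    using padded_projection_decomposition[OF assms(1) bounded] assms(4) by blast
  then obtain P where P: "\<And>j k. P j k \<in> M \<and> projection (P j k)"
    and below: "\<And>j k z. P j k z = range_proj (b j) (P j k z)"
    and b_sum: "\<And>j. b j = (\<lambda>x. \<Sum>k<N. P j k x)"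
    by metis
  (* Pieces of non-adjacent b_j lie under orthogonal range projections. *)
  have orth: "P i k (P j k x) = 0" if "i > j + 1 \<or> j > i + 1" for i j k x
  proof (rule orthogonal_below_orthogonal[where A="P i k" and B="P j k" and RA="range_proj (b i)"
        and RB="range_proj (b j)"])
    show "range_proj (b j) \<circ> range_proj (b i) = (\<lambda>x. 0)"
      using assms(3) that by auto
  qed (use P range_proj_props(1)[OF bounded] below in blast)+
  have "b = (\<lambda>j x. \<Sum>k<N. P j k x)"
    using b_sum by blast
  then show ?thesis
    using adjacent_orthogonal_series[of M P, OF assms(1) P orth] unfolding N_def by simp
qed

end
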